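(* In the Majority Model (MM) on the cycle $C_n=(v_0,\dots,v_{n-1})$, the number of stable colorings is $\Theta(\Phi^n)$, where $\Phi=\frac{1+\sqrt5}{2}$ is the golden ratio.
   Context: A coloring is a map from the nodes to $\{b,w\}$. In MM, all nodes update simultaneously: a node adopts the color strictly more frequent among its neighbors in the previous round and keeps its color in case of a tie. A coloring is stable if one application of the MM update rule returns the same coloring. *)

theory Defs
  imports Complex_Main "HOL-Library.FuncSet" "HOL-Library.Landau_Symbols"
begin

datatype color = B | W

definition mm_step :: "('v \<Rightarrow> 'v set) \<Rightarrow> ('v \<Rightarrow> color) \<Rightarrow> 'v \<Rightarrow> color" where
  "mm_step N c v =
     (let nb = card {u \<in> N v. c u = B}; nw = card {u \<in> N v. c u = W}
      in if nb > nw then B else if nw > nb then W else c v)"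

definition mm_stable :: "'v set \<Rightarrow> ('v \<Rightarrow> 'v set) \<Rightarrow> ('v \<Rightarrow> color) \<Rightarrow> bool" where
  "mm_stable V N c \<longleftrightarrow> (\<forall>v\<in>V. mm_step N c v = c v)"

definition cycle_nbrs :: "nat \<Rightarrow> nat \<Rightarrow> nat set" where
  "cycle_nbrs n i = {(i + 1) mod n, (i + n - 1) mod n}"

definition num_stable_cycle :: "nat \<Rightarrow> nat" where
  "num_stable_cycle n =
     card {c \<in> {0..<n} \<rightarrow>\<^sub>E (UNIV :: color set). mm_stable {0..<n} (cycle_nbrs n) c}"

end

(* A colouring of the cycle C_n, n >= 3, is stable iff every vertex shares its colour with
   one of its two neighbours.  Read along the cycle, a stable colouring is therefore a word in
   which every interior letter agrees with a neighbour; dropping the first letter (or the first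
   two, if they differ) shows that there are 2 F(n+1) such words of length n.  Conversely,
   doubling the first and the last letter of such a word of length n yields a stable colouring
   of C_(n+2).  Hence F(n) <= #stable colourings of C_n <= 4 F(n), and F(n) ~ phi^n / sqrt 5. *)

theory Submission
  imports Defs "HOL-Number_Theory.Fib"
begin

lemma UNIV_color: "(UNIV :: color set) = {B, W}"
  using color.exhaust by auto

lemma finite_UNIV_color: "finite (UNIV :: color set)"
  by (simp add: UNIV_color)

lemma card_UNIV_color: "card (UNIV :: color set) = 2"
  by (simp add: UNIV_color)

lemma mm_step_fixed_iff_two_neighbours:
  assumes "N v = {p, q}" "p \<noteq> q"
  shows "mm_step N c v = c v \<longleftrightarrow> c p = c v \<or> c q = c v"
proof -
  have card_matching: "card {u \<in> N v. c u = x} = of_bool (c p = x) + of_bool (c q = x)" for x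
  proof -
    have "{u \<in> N v. c u = x} = (if c p = x then {p} else {}) \<union> (if c q = x then {q} else {})"
      using assms(1) by auto
    then show ?thesis
      using assms(2) by simp
  qed
  show ?thesis
    unfolding mm_step_def Let_def card_matching
    by (cases "c p"; cases "c q"; cases "c v") simp_all
qed

lemma mm_stable_cycle_iff:
  assumes "n \<ge> 3"
  shows "mm_stable {0..<n} (cycle_nbrs n) c \<longleftrightarrow>
           (\<forall>i<n. c ((i + 1) mod n) = c i \<or> c ((i + n - 1) mod n) = c i)"
proof -
  have "mm_step (cycle_nbrs n) c i = c i \<longleftrightarrow>
          c ((i + 1) mod n) = c i \<or> c ((i + n - 1) mod n) = c i" if "i < n" for i
  proof (rule mm_step_fixed_iff_two_neighbours[OF cycle_nbrs_def])
    have "(i + n - 1) mod n = (if i = 0 then n - 1 else i - 1)"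
      using that by (cases i) simp_all
    then show "(i + 1) mod n \<noteq> (i + n - 1) mod n"
      using assms that by (auto simp: mod_Suc)
  qed
  then show ?thesis
    by (auto simp: mm_stable_def)
qed

fun other_color :: "color \<Rightarrow> color" where
  "other_color B = W"
| "other_color W = B"

lemma eq_other_color_iff [simp]: "c = other_color d \<longleftrightarrow> c \<noteq> d"
  by (cases c; cases d) simp_all

fun interior_matched :: "'a list \<Rightarrow> bool" where
  "interior_matched (x # y # z # zs) \<longleftrightarrow> (y = x \<or> y = z) \<and> interior_matched (y # z # zs)"
| "interior_matched _ \<longleftrightarrow> True"

lemma interior_matched_iff_nth:
  "interior_matched xs \<longleftrightarrow>
     (\<forall>i. i + 2 < length xs \<longrightarrow> xs ! (i + 1) = xs ! i \<or> xs ! (i + 1) = xs ! (i + 2))"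
proof (induction xs rule: interior_matched.induct)
  case (1 x y z zs)
  have split_first: "(\<forall>i::nat. P i) \<longleftrightarrow> P 0 \<and> (\<forall>i. P (Suc i))" for P
    by (metis not0_implies_Suc)
  show ?case
    by (subst split_first) (simp add: 1)
qed auto

lemma interior_matched_short: "length xs \<le> 2 \<Longrightarrow> interior_matched xs"
  by (cases xs rule: interior_matched.cases) auto

lemma interior_matched_Cons_Cons_same [simp]:
  "interior_matched (x # x # xs) \<longleftrightarrow> interior_matched (x # xs)"
  by (cases xs) auto

lemma interior_matched_Cons_hd:
  "interior_matched xs \<Longrightarrow> interior_matched (hd xs # xs)"
  by (cases xs) auto

lemma interior_matched_snoc_last:
  "interior_matched xs \<Longrightarrow> interior_matched (xs @ [last xs])"
  by (induction xs rule: interior_matched.induct) auto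

definition interior_matched_lists :: "nat \<Rightarrow> color list set" where
  "interior_matched_lists n = {xs. length xs = n \<and> interior_matched xs}"

lemma finite_interior_matched_lists: "finite (interior_matched_lists n)"
  unfolding interior_matched_lists_def
  by (rule finite_subset[OF _ finite_lists_length_eq[OF finite_UNIV_color, of n]]) auto

lemma interior_matched_lists_short:
  assumes "n \<le> 2"
  shows "card (interior_matched_lists n) = 2 ^ n"
proof -
  have "interior_matched_lists n = {xs. length xs = n}"
    using assms by (auto simp: interior_matched_lists_def interior_matched_short)
  then show ?thesis
    using card_lists_length_eq[OF finite_UNIV_color, of n] by (simp add: card_UNIV_color)
qed

lemma interior_matched_lists_plus_3:
  "interior_matched_lists (n + 3) =
     (\<lambda>xs. hd xs # xs) ` interior_matched_lists (n + 2) \<union>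
     (\<lambda>xs. other_color (hd xs) # hd xs # xs) ` interior_matched_lists (n + 1)"
proof (intro equalityI subsetI)
  fix xs assume "xs \<in> interior_matched_lists (n + 3)"
  then obtain x y z zs where xs: "xs = x # y # z # zs" "length zs = n"
    and matched: "y = x \<or> y = z" "interior_matched (y # z # zs)"
    by (auto simp: interior_matched_lists_def numeral_eq_Suc length_Suc_conv)
  show "xs \<in> (\<lambda>xs. hd xs # xs) ` interior_matched_lists (n + 2) \<union>
     (\<lambda>xs. other_color (hd xs) # hd xs # xs) ` interior_matched_lists (n + 1)"
  proof (cases "y = x")
    case True
    then have "xs = hd (y # z # zs) # y # z # zs" using xs by simp
    moreover have "y # z # zs \<in> interior_matched_lists (n + 2)"
      using xs matched by (simp add: interior_matched_lists_def)
    ultimately show ?thesis by blast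
  next
    case False
    then have "xs = other_color (hd (z # zs)) # hd (z # zs) # z # zs"
      using xs matched by simp
    moreover have "z # zs \<in> interior_matched_lists (n + 1)"
      using xs matched False by (simp add: interior_matched_lists_def)
    ultimately show ?thesis by blast
  qed
next
  fix xs assume "xs \<in> (\<lambda>xs. hd xs # xs) ` interior_matched_lists (n + 2) \<union>
     (\<lambda>xs. other_color (hd xs) # hd xs # xs) ` interior_matched_lists (n + 1)"
  then show "xs \<in> interior_matched_lists (n + 3)"
    by (auto simp: interior_matched_lists_def interior_matched_Cons_hd length_Suc_conv)
qed

lemma card_interior_matched_lists_plus_3:
  "card (interior_matched_lists (n + 3)) =
     card (interior_matched_lists (n + 2)) + card (interior_matched_lists (n + 1))"
proof -
  let ?dup = "\<lambda>xs. hd xs # xs" and ?alt = "\<lambda>xs. other_color (hd xs) # hd xs # xs"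
  have "inj_on ?dup A" "inj_on ?alt A" for A :: "color list set"
    by (auto intro: inj_onI)
  moreover have "?dup ` interior_matched_lists (n + 2) \<inter> ?alt ` interior_matched_lists (n + 1) = {}"
    by (auto dest: arg_cong[of _ _ tl])
  ultimately show ?thesis
    unfolding interior_matched_lists_plus_3
    by (simp add: card_Un_disjoint card_image finite_interior_matched_lists)
qed

lemma card_interior_matched_lists_fib:
  "card (interior_matched_lists (n + 1)) = 2 * fib (n + 2)"
proof (induction n rule: fib.induct)
  case (3 n)
  then show ?case
    using card_interior_matched_lists_plus_3[of n] by (simp add: numeral_eq_Suc)
qed (simp_all add: interior_matched_lists_short numeral_eq_Suc)

lemma interior_matched_if_mm_stable_cycle:
  assumes "n \<ge> 3" "mm_stable {0..<n} (cycle_nbrs n) c"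
  shows "interior_matched (map c [0..<n])"
  unfolding interior_matched_iff_nth
proof (intro allI impI)
  fix i assume "i + 2 < length (map c [0..<n])"
  then have i: "i + 2 < n" by simp
  have "c ((i + 1 + 1) mod n) = c (i + 1) \<or> c ((i + 1 + n - 1) mod n) = c (i + 1)"
    using assms(2) i unfolding mm_stable_cycle_iff[OF assms(1)]
    by (metis add_lessD1 add_2_eq_Suc' Suc_eq_plus1)
  moreover have "(i + 1 + 1) mod n = i + 2" "(i + 1 + n - 1) mod n = i"
    using i by simp_all
  ultimately show "map c [0..<n] ! (i + 1) = map c [0..<n] ! i \<or>
                   map c [0..<n] ! (i + 1) = map c [0..<n] ! (i + 2)"
    using i by (auto simp: nth_map_upt)
qed

lemma mm_stable_cycle_if_interior_matched:
  assumes "n \<ge> 3" "length ys = n" "interior_matched ys"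
    and "ys ! 1 = ys ! 0" "ys ! (n - 2) = ys ! (n - 1)"
  shows "mm_stable {0..<n} (cycle_nbrs n) (restrict ((!) ys) {0..<n})"
  unfolding mm_stable_cycle_iff[OF assms(1)]
proof (intro allI impI)
  fix i assume i: "i < n"
  consider "i = 0" | "i = n - 1" | "0 < i" "i < n - 1"
    using i by linarith
  then show "restrict ((!) ys) {0..<n} ((i + 1) mod n) = restrict ((!) ys) {0..<n} i \<or>
             restrict ((!) ys) {0..<n} ((i + n - 1) mod n) = restrict ((!) ys) {0..<n} i"
  proof cases
    case 1
    then show ?thesis using assms by simp
  next
    case 2
    then have "(i + n - 1) mod n = n - 2"
      using assms(1) by (simp add: mod_if)
    then show ?thesis using assms 2 by simp
  next
    case 3
    have "ys ! (i - 1 + 1) = ys ! (i - 1) \<or> ys ! (i - 1 + 1) = ys ! (i - 1 + 2)"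
      using assms(3) 3 unfolding interior_matched_iff_nth assms(2)
      by (metis Suc_diff_1 add_2_eq_Suc' Suc_eq_plus1 less_diff_conv)
    moreover have "(i + n - 1) mod n = i - 1"
      using 3 by (simp add: mod_if)
    ultimately show ?thesis
      using 3 by (auto simp: Suc_diff_Suc numeral_eq_Suc)
  qed
qed

lemma mm_stable_cycle_double_ends:
  assumes "xs \<noteq> []" "interior_matched xs"
  defines "ys \<equiv> hd xs # xs @ [last xs]"
  shows "mm_stable {0..<length ys} (cycle_nbrs (length ys)) (restrict ((!) ys) {0..<length ys})"
proof (rule mm_stable_cycle_if_interior_matched)
  show "interior_matched ys"
    using interior_matched_Cons_hd[OF interior_matched_snoc_last[OF assms(2)]] assms(1)
    by (simp add: ys_def)
  show "ys ! 1 = ys ! 0" "ys ! (length ys - 2) = ys ! (length ys - 1)"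
    using assms(1) by (auto simp: ys_def hd_conv_nth last_conv_nth nth_append)
qed (use assms(1) in \<open>simp_all add: ys_def Suc_le_eq\<close>)

lemma num_stable_cycle_le_card_interior_matched_lists:
  assumes "n \<ge> 3"
  shows "num_stable_cycle n \<le> card (interior_matched_lists n)"
  unfolding num_stable_cycle_def
proof (rule card_inj_on_le[where f = "\<lambda>c. map c [0..<n]"])
  show "inj_on (\<lambda>c. map c [0..<n]) {c \<in> {0..<n} \<rightarrow>\<^sub>E UNIV. mm_stable {0..<n} (cycle_nbrs n) c}"
    by (rule inj_onI) (auto intro: PiE_ext simp: map_eq_conv)
  show "(\<lambda>c. map c [0..<n]) ` {c \<in> {0..<n} \<rightarrow>\<^sub>E UNIV. mm_stable {0..<n} (cycle_nbrs n) c}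
          \<subseteq> interior_matched_lists n"
    using interior_matched_if_mm_stable_cycle[OF assms] by (auto simp: interior_matched_lists_def)
qed (rule finite_interior_matched_lists)

lemma card_interior_matched_lists_le_num_stable_cycle:
  assumes "n \<ge> 1"
  shows "card (interior_matched_lists n) \<le> num_stable_cycle (n + 2)"
  unfolding num_stable_cycle_def
proof (rule card_inj_on_le)
  define pad :: "color list \<Rightarrow> color list" where "pad xs = hd xs # xs @ [last xs]" for xs
  let ?coloring = "\<lambda>xs. restrict ((!) (pad xs)) {0..<n + 2}"
  have pad_length: "length (pad xs) = n + 2" if "xs \<in> interior_matched_lists n" for xs
    using that by (simp add: pad_def interior_matched_lists_def)
  show "inj_on ?coloring (interior_matched_lists n)"
  proof (rule inj_onI)
    fix xs ys assume xs: "xs \<in> interior_matched_lists n" and ys: "ys \<in> interior_matched_lists n"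
      and same_coloring: "?coloring xs = ?coloring ys"
    have "pad xs ! i = pad ys ! i" if "i < n + 2" for i
      using fun_cong[OF same_coloring, of i] that by simp
    then have "pad xs = pad ys"
      by (intro nth_equalityI) (simp_all add: pad_length xs ys)
    then show "xs = ys"
      by (simp add: pad_def)
  qed
  show "?coloring ` interior_matched_lists n \<subseteq>
          {c \<in> {0..<n + 2} \<rightarrow>\<^sub>E UNIV. mm_stable {0..<n + 2} (cycle_nbrs (n + 2)) c}"
  proof
    fix c assume "c \<in> ?coloring ` interior_matched_lists n"
    then obtain xs where xs: "xs \<in> interior_matched_lists n" and c: "c = ?coloring xs"
      by blast
    then have "xs \<noteq> []" "interior_matched xs"
      using assms by (auto simp: interior_matched_lists_def)
    then show "c \<in> {c \<in> {0..<n + 2} \<rightarrow>\<^sub>E UNIV. mm_stable {0..<n + 2} (cycle_nbrs (n + 2)) c}"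
      using mm_stable_cycle_double_ends[of xs] pad_length[OF xs] c by (simp add: pad_def)
  qed
qed (simp add: finite_PiE finite_UNIV_color)

lemma fib_bigtheta_golden_ratio: "(\<lambda>n. real (fib n)) \<in> \<Theta>(\<lambda>n. ((1 + sqrt 5) / 2) ^ n)"
proof -
  have "(\<lambda>n. real (fib n)) \<sim>[at_top] (\<lambda>n. ((1 + sqrt 5) / 2) ^ n / sqrt 5)"
    using fib_asymptotics by (intro asymp_equivI') simp
  then have "(\<lambda>n. real (fib n)) \<in> \<Theta>(\<lambda>n. ((1 + sqrt 5) / 2) ^ n / sqrt 5)"
    by (rule asymp_equiv_imp_bigtheta)
  then show ?thesis
    by simp
qed

lemma num_stable_cycle_between_fib:
  assumes "n \<ge> 3"
  shows "fib n \<le> num_stable_cycle n \<and> num_stable_cycle n \<le> 4 * fib n"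
proof -
  obtain m where n: "n = m + 3"
    using assms by (metis add.commute le_Suc_ex)
  have fib_n: "fib n = fib (m + 2) + fib (m + 1)"
    using fib_plus_2[of "m + 1"] by (simp add: n numeral_eq_Suc)
  have "fib n \<le> 2 * fib (m + 2)"
    using fib_n fib_mono[of "m + 1" "m + 2"] by simp
  also have "\<dots> = card (interior_matched_lists (m + 1))"
    by (rule card_interior_matched_lists_fib[symmetric])
  also have "\<dots> \<le> num_stable_cycle n"
    using card_interior_matched_lists_le_num_stable_cycle[of "m + 1"] by (simp add: n numeral_eq_Suc)
  finally have lower: "fib n \<le> num_stable_cycle n" .
  have "num_stable_cycle n \<le> card (interior_matched_lists n)"
    by (rule num_stable_cycle_le_card_interior_matched_lists[OF assms])
  also have "\<dots> = 2 * fib (m + 4)"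
    using card_interior_matched_lists_fib[of "m + 2"] by (simp add: n numeral_eq_Suc)
  also have "\<dots> = 2 * (fib n + fib (m + 2))"
    using fib_plus_2[of "m + 2"] by (simp add: n numeral_eq_Suc)
  also have "\<dots> \<le> 4 * fib n"
    using fib_n by simp
  finally show ?thesis
    using lower by simp
qed

theorem theorem2p8:
  shows "(\<lambda>n. real (num_stable_cycle n)) \<in> \<Theta>(\<lambda>n. ((1 + sqrt 5) / 2) ^ n)"
proof -
  have "(\<lambda>n. real (num_stable_cycle n)) \<in> \<Theta>(\<lambda>n. real (fib n))"
  proof (rule bigthetaI'[of 1 4])
    show "\<forall>\<^sub>F n in at_top. 1 * norm (real (fib n)) \<le> norm (real (num_stable_cycle n)) \<and>
                          norm (real (num_stable_cycle n)) \<le> 4 * norm (real (fib n))"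
      using eventually_ge_at_top[of 3]
    proof eventually_elim
      fix n :: nat assume "n \<ge> 3"
      then have "real (fib n) \<le> real (num_stable_cycle n) \<and> real (num_stable_cycle n) \<le> real (4 * fib n)"
        by (simp only: of_nat_le_iff num_stable_cycle_between_fib)
      then show "1 * norm (real (fib n)) \<le> norm (real (num_stable_cycle n)) \<and>
                 norm (real (num_stable_cycle n)) \<le> 4 * norm (real (fib n))"
        by simp
    qed
  qed simp_all
  then show ?thesis
    using fib_bigtheta_golden_ratio by (rule landau_theta.trans)
qed

end
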